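(* Let $\alpha \in [0, 1/10)$, let $G$ be an abelian group, let $A$ be a non-empty finite subset of $G$, and let $H$ be a finite subgroup of $G$. If $d(U_A, U_H) \le \alpha$, then there exists $x \in G$ such that \[|A \,\Delta\, (H + \{x\})| \le 10\, \alpha\, |H|.\]
   Context: $\log$ is the natural logarithm. For a random variable $X$ with finite range $R$, $\mathbb{H}(X) = -\sum_{x\in R}\mathbb{P}(X=x)\log \mathbb{P}(X=x)$ is its Shannon entropy. For a non-empty finite set $A$, $U_A$ denotes a random variable uniformly distributed on $A$. For random variables $X,Y$ with finite range in an abelian group, the entropic Ruzsa distance is $d(X,Y) = \mathbb{H}(X'+Y') - (\mathbb{H}(X')+\mathbb{H}(Y'))/2$, where $X',Y'$ are independent with the same distributions as $X,Y$ respectively. $\Delta$ denotes symmetric difference and $H+\{x\}=\{h+x: h\in H\}$. *)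

theory Defs
  imports "HOL-Probability.Probability"
begin

definition entropy_pmf :: "'a pmf \<Rightarrow> real" where
  "entropy_pmf p = - (\<Sum>x\<in>set_pmf p. pmf p x * ln (pmf p x))"

text \<open>Entropic Ruzsa distance d(X,Y) where X, Y have distributions p, q:
  H(X'+Y') - (H(X') + H(Y'))/2 with X', Y' independent.\<close>
definition ruzsa_dist :: "'a::ab_group_add pmf \<Rightarrow> 'a pmf \<Rightarrow> real" where
  "ruzsa_dist p q =
     entropy_pmf (map_pmf (\<lambda>(x, y). x + y) (pair_pmf p q))
     - (entropy_pmf p + entropy_pmf q) / 2"

definition add_subgroup :: "'a::ab_group_add set \<Rightarrow> bool" where
  "add_subgroup H \<longleftrightarrow> 0 \<in> H \<and> (\<forall>x\<in>H. \<forall>y\<in>H. x + y \<in> H) \<and> (\<forall>x\<in>H. - x \<in> H)"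

end

theory Submission
  imports Defs
begin

text \<open>Write \<open>q\<close> for the law of \<open>U\<^sub>A + U\<^sub>H\<close> and pick \<open>x\<close> where \<open>q\<close> is largest.
  Then \<open>q x = |A \<inter> (H + x)| / (|A| |H|)\<close>, and since \<open>\<bbbH>(q) \<ge> -log q x\<close>, writing
  \<open>a = |A \<inter> (H + x)|\<close> the hypothesis gives \<open>log (|A|/a) + log (|H|/a) \<le> 2 d(U\<^sub>A, U\<^sub>H) \<le> 2\<alpha>\<close>.
  By \<open>log t \<ge> 1 - 1/t\<close> both \<open>1 - a/|A|\<close> and \<open>1 - a/|H|\<close> are small, in particular
  \<open>|A| \<le> 5|H|\<close>, and \<open>|A \<Delta> (H + x)| = (|A| - a) + (|H| - a) \<le> 10 \<alpha> |H|\<close>.\<close>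

lemma entropy_pmf_of_set:
  assumes "finite A" "A \<noteq> {}"
  shows "entropy_pmf (pmf_of_set A) = ln (card A)"
proof -
  have "card A > 0" using assms by (simp add: card_gt_0_iff)
  have "entropy_pmf (pmf_of_set A) = - (\<Sum>x\<in>A. (1 / real (card A)) * ln (1 / real (card A)))"
    unfolding entropy_pmf_def using assms by (simp add: pmf_of_set)
  also have "\<dots> = ln (card A)" using \<open>card A > 0\<close> by (simp add: ln_div)
  finally show ?thesis .
qed

lemma entropy_pmf_ge_neg_ln_bound:
  assumes "finite (set_pmf p)" "\<And>y. pmf p y \<le> M"
  shows "- ln M \<le> entropy_pmf p"
proof -
  have "(\<Sum>x\<in>set_pmf p. pmf p x * ln (pmf p x)) \<le> (\<Sum>x\<in>set_pmf p. pmf p x * ln M)"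
  proof (rule sum_mono)
    fix x assume "x \<in> set_pmf p"
    then have "pmf p x > 0" by (simp add: pmf_positive)
    then show "pmf p x * ln (pmf p x) \<le> pmf p x * ln M" using assms(2)[of x] by simp
  qed
  also have "\<dots> = ln M"
    using sum_pmf_eq_1[OF assms(1) order.refl] by (simp add: sum_distrib_right[symmetric])
  finally show ?thesis unfolding entropy_pmf_def by simp
qed

lemma pmf_attains_max:
  assumes "finite (set_pmf p)"
  obtains x where "x \<in> set_pmf p" "\<And>y. pmf p y \<le> pmf p x"
proof -
  obtain x where x: "x \<in> set_pmf p" "Max (pmf p ` set_pmf p) = pmf p x"
    using obtains_MAX[OF assms set_pmf_not_empty] by blast
  have "pmf p y \<le> pmf p x" for y
  proof (cases "y \<in> set_pmf p")
    case True
    then show ?thesis using assms by (simp flip: x(2))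
  next
    case False
    then show ?thesis by (simp add: set_pmf_iff)
  qed
  with x(1) show thesis using that by blast
qed

lemma add_subgroup_nonempty: "add_subgroup H \<Longrightarrow> H \<noteq> {}"
  unfolding add_subgroup_def by auto

lemma add_subgroup_translate_iff:
  assumes "add_subgroup H"
  shows "y \<in> (\<lambda>b. a + b) ` H \<longleftrightarrow> a \<in> (\<lambda>h. h + y) ` H"
proof
  assume "y \<in> (\<lambda>b. a + b) ` H"
  then obtain b where "b \<in> H" "a = - b + y" by (auto simp: algebra_simps)
  moreover have "- b \<in> H" using \<open>b \<in> H\<close> assms unfolding add_subgroup_def by blast
  ultimately show "a \<in> (\<lambda>h. h + y) ` H" by blast
next
  assume "a \<in> (\<lambda>h. h + y) ` H"
  then obtain b where "b \<in> H" "y = a + - b" by (auto simp: algebra_simps)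
  moreover have "- b \<in> H" using \<open>b \<in> H\<close> assms unfolding add_subgroup_def by blast
  ultimately show "y \<in> (\<lambda>b. a + b) ` H" by blast
qed

lemma map_pmf_add_pair_pmf:
  "map_pmf (\<lambda>(x, y). x + y) (pair_pmf p q) = bind_pmf p (\<lambda>a. map_pmf (\<lambda>b. a + b) q)"
  by (simp add: pair_pmf_def map_bind_pmf map_pmf_def[symmetric] bind_return_pmf pmf.map_comp o_def)

lemma pmf_add_uniform_subgroup:
  fixes A H :: "'a::ab_group_add set"
  assumes "finite A" "A \<noteq> {}" "finite H" "add_subgroup H"
  shows "pmf (map_pmf (\<lambda>(x, y). x + y) (pair_pmf (pmf_of_set A) (pmf_of_set H))) y
     = card (A \<inter> (\<lambda>h. h + y) ` H) / (card A * card H)"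
proof -
  have "H \<noteq> {}" using assms(4) by (rule add_subgroup_nonempty)
  have translate: "map_pmf (\<lambda>b. a + b) (pmf_of_set H) = pmf_of_set ((\<lambda>b. a + b) ` H)" for a
    by (rule map_pmf_of_set_inj) (use assms \<open>H \<noteq> {}\<close> in auto)
  have "pmf (map_pmf (\<lambda>(x, y). x + y) (pair_pmf (pmf_of_set A) (pmf_of_set H))) y
     = (\<Sum>a\<in>A. indicator ((\<lambda>b. a + b) ` H) y / card H) / card A"
    unfolding map_pmf_add_pair_pmf using assms \<open>H \<noteq> {}\<close>
    by (simp add: pmf_bind_pmf_of_set translate pmf_of_set card_image)
  also have "(\<Sum>a\<in>A. indicator ((\<lambda>b. a + b) ` H) y / card H)
      = (\<Sum>a\<in>A. indicator ((\<lambda>h. h + y) ` H) a) / card H"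
    by (simp add: sum_divide_distrib[symmetric] indicator_def add_subgroup_translate_iff[OF assms(4)])
  also have "(\<Sum>a\<in>A. indicator ((\<lambda>h. h + y) ` H) a) = real (card (A \<inter> (\<lambda>h. h + y) ` H))"
    using assms(1) by (simp add: indicator_def sum.If_cases Int_def)
  finally show ?thesis by simp
qed

lemma ruzsa_dist_uniform_subgroup_ge_overlap:
  fixes A H :: "'a::ab_group_add set"
  assumes "finite A" "A \<noteq> {}" "finite H" "add_subgroup H"
  obtains x where "A \<inter> (\<lambda>h. h + x) ` H \<noteq> {}"
    and "(ln (card A) + ln (card H)) / 2 - ln (card (A \<inter> (\<lambda>h. h + x) ` H))
           \<le> ruzsa_dist (pmf_of_set A) (pmf_of_set H)"
proof -
  have "H \<noteq> {}" using assms(4) by (rule add_subgroup_nonempty)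
  define q where "q = map_pmf (\<lambda>(x, y). x + y) (pair_pmf (pmf_of_set A) (pmf_of_set H))"
  have "finite (set_pmf q)"
    unfolding q_def using assms \<open>H \<noteq> {}\<close> by (simp add: set_pair_pmf)
  then obtain x where x: "x \<in> set_pmf q" "\<And>y. pmf q y \<le> pmf q x"
    by (rule pmf_attains_max) blast
  define a where "a = card (A \<inter> (\<lambda>h. h + x) ` H)"
  have q_x: "pmf q x = a / (card A * card H)"
    unfolding q_def a_def by (rule pmf_add_uniform_subgroup[OF assms])
  have "card A > 0" "card H > 0" using assms \<open>H \<noteq> {}\<close> by (auto simp: card_gt_0_iff)
  moreover have "a > 0" using x(1) q_x by (cases "a = 0") (auto simp: set_pmf_eq)
  ultimately have "ln (card A) + ln (card H) - ln a = - ln (pmf q x)"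
    unfolding q_x by (simp add: ln_div ln_mult)
  also have "\<dots> \<le> entropy_pmf q"
    using entropy_pmf_ge_neg_ln_bound \<open>finite (set_pmf q)\<close> x(2) .
  finally have "(ln (card A) + ln (card H)) / 2 - ln a \<le> ruzsa_dist (pmf_of_set A) (pmf_of_set H)"
    unfolding ruzsa_dist_def q_def[symmetric] using assms \<open>H \<noteq> {}\<close>
    by (simp add: entropy_pmf_of_set field_simps)
  moreover have "A \<inter> (\<lambda>h. h + x) ` H \<noteq> {}" using \<open>a > 0\<close> unfolding a_def by auto
  ultimately show thesis using that a_def by blast
qed

lemma sym_diff_bound_of_log_overlap:
  fixes n h a \<alpha> :: real
  assumes "0 < a" "a \<le> n" "a \<le> h" "ln (n / a) + ln (h / a) \<le> 2 * \<alpha>" "\<alpha> < 1/10"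
  shows "n + h - 2 * a \<le> 10 * \<alpha> * h"
proof -
  have "0 < n" "0 < h" using assms by auto
  have "1 - a / n \<le> ln (n / a)" "1 - a / h \<le> ln (h / a)"
    using ln_le_minus_one[of "a / n"] ln_le_minus_one[of "a / h"] assms \<open>0 < n\<close> \<open>0 < h\<close>
    by (simp_all add: ln_div)
  moreover have "0 \<le> 1 - a / n" "0 \<le> 1 - a / h" using assms \<open>0 < n\<close> \<open>0 < h\<close> by simp_all
  ultimately have L: "(1 - a / n) + (1 - a / h) \<le> 2 * \<alpha>" "1 - a / n < 1/5"
    using assms(4,5) by linarith+
  from L(2) have "n \<le> 5 * h" using \<open>0 < n\<close> assms(3) by (simp add: field_simps)
  have "n + h - 2 * a = n * (1 - a / n) + h * (1 - a / h)"
    using \<open>0 < n\<close> \<open>0 < h\<close> by (simp add: field_simps)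
  also have "\<dots> \<le> 5 * h * (1 - a / n) + 5 * h * (1 - a / h)"
    using \<open>n \<le> 5 * h\<close> \<open>0 \<le> 1 - a / n\<close> \<open>0 \<le> 1 - a / h\<close> \<open>0 < h\<close>
    by (intro add_mono mult_right_mono) auto
  also have "\<dots> \<le> 5 * h * (2 * \<alpha>)"
    using L(1) \<open>0 < h\<close> by (simp flip: distrib_left)
  finally show ?thesis by (simp add: mult_ac)
qed

lemma card_sym_diff:
  assumes "finite A" "finite B"
  shows "card (sym_diff A B) = card A + card B - 2 * card (A \<inter> B)"
proof -
  have "card ((A - B) \<union> (B - A)) = card (A - B) + card (B - A)"
    using assms by (intro card_Un_disjoint) auto
  moreover have "card (A - B) = card A - card (A \<inter> B)" "card (B - A) = card B - card (A \<inter> B)"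
    using assms by (simp_all add: card_Diff_subset_Int Diff_Int2 card_Diff_subset Int_commute)
  moreover have "card (A \<inter> B) \<le> card A" "card (A \<inter> B) \<le> card B"
    using assms by (simp_all add: card_mono)
  ultimately show ?thesis by simp
qed

theorem mainTheorem3:
  fixes \<alpha> :: real and A H :: "'a::ab_group_add set"
  assumes "0 \<le> \<alpha>" and "\<alpha> < 1/10"
    and "finite A" and "A \<noteq> {}"
    and "finite H" and "add_subgroup H"
    and "ruzsa_dist (pmf_of_set A) (pmf_of_set H) \<le> \<alpha>"
  shows "\<exists>x. real (card ((A - (\<lambda>h. h + x) ` H) \<union> ((\<lambda>h. h + x) ` H - A)))
               \<le> 10 * \<alpha> * real (card H)"
proof -
  obtain x where overlap: "A \<inter> (\<lambda>h. h + x) ` H \<noteq> {}"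
    and dist: "(ln (card A) + ln (card H)) / 2 - ln (card (A \<inter> (\<lambda>h. h + x) ` H))
                 \<le> ruzsa_dist (pmf_of_set A) (pmf_of_set H)"
    using ruzsa_dist_uniform_subgroup_ge_overlap[OF assms(3-6)] by blast
  define B where "B = (\<lambda>h. h + x) ` H"
  define a where "a = card (A \<inter> B)"
  have "finite B" "card B = card H" unfolding B_def using assms(5) by (simp_all add: card_image)
  have "0 < a" using overlap assms(3) unfolding a_def B_def by (simp add: card_gt_0_iff)
  moreover have "a \<le> card A" "a \<le> card H"
    unfolding a_def \<open>card B = card H\<close>[symmetric] using assms(3) \<open>finite B\<close> by (simp_all add: card_mono)
  moreover have "ln (card A / a) + ln (card H / a) \<le> 2 * \<alpha>"
    using dist assms(7) calculation unfolding a_def B_def by (simp add: ln_div field_simps)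
  ultimately have "real (card A) + card H - 2 * a \<le> 10 * \<alpha> * card H"
    using sym_diff_bound_of_log_overlap assms(2) by simp
  then show ?thesis
    using card_sym_diff[OF assms(3) \<open>finite B\<close>] \<open>card B = card H\<close> \<open>a \<le> card A\<close> \<open>a \<le> card H\<close>
    unfolding a_def B_def by (intro exI[of _ x]) simp
qed

end
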